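(* Let $(X,d_X,\mu)$ be a compact metric measure space and let $\iota:X\to Z$ be an isometry onto its image $X':=\iota(X)\subset Z$ in a metric space $(Z,d_Z)$. Let $D^{X'}$ be the distance kernel operator of $(X',d_Z,\iota_\#\mu)$. Then there is a bijection $\iota^*:L^2(X,\mu)\to L^2(X',\iota_\#\mu)$ such that $D^{X'}\circ\iota^*=\iota^*\circ D^X$. In particular, $\phi$ is an eigenfunction of $D^X$ with eigenvalue $\lambda$ if and only if $\iota^*\phi$ is an eigenfunction of $D^{X'}$ with eigenvalue $\lambda$, and, denoting by $\Phi_k:X\to\mathbb{C}^k$ and $\Phi'_k:X'\to\mathbb{C}^k$ the distance kernel embeddings of $X$ and $X'$, we have $\Phi_k(X)=\Phi'_k(X')$.
   Context: For a compact metric measure space $(X,d,\mu)$, the distance kernel operator is $(D^Xf)(x)=\int_X f(y)d(x,y)\,d\mu(y)$ on $L^2(X,\mu)$. Its eigenvalues $\lambda_i$ are real and ordered by decreasing absolute value (assumed non-zero with distinct absolute values among the top $k$), with $L^2$-orthonormal real eigenfunctions $\phi_i$ whose signs are fixed by $\langle\phi_i,|\phi_i|\rangle>0$. With $\alpha_i=\sqrt{\lambda_i}\phi_i$ (square root with positive imaginary part if $\lambda_i<0$), the distance kernel embedding is $\Phi_k(x)=(\alpha_1(x),\dots,\alpha_k(x))$. $\iota_\#\mu$ denotes the pushforward measure. *)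

theory Defs
  imports "HOL-Analysis.Analysis"
begin

text \<open>Square-integrable real functions (representatives of elements of L^2(M)).\<close>
definition L2 :: "'a measure \<Rightarrow> ('a \<Rightarrow> real) set" where
  "L2 M = {f \<in> borel_measurable M. integrable M (\<lambda>x. (f x)\<^sup>2)}"

text \<open>Equality in L^2, i.e. almost-everywhere equality.\<close>
definition ae_eq :: "'a measure \<Rightarrow> ('a \<Rightarrow> real) \<Rightarrow> ('a \<Rightarrow> real) \<Rightarrow> bool" where
  "ae_eq M f g \<longleftrightarrow> (AE x in M. f x = g x)"

definition L2_inner :: "'a measure \<Rightarrow> ('a \<Rightarrow> real) \<Rightarrow> ('a \<Rightarrow> real) \<Rightarrow> real" where
  "L2_inner M f g = (LINT x|M. f x * g x)"

definition dk_op :: "'a::metric_space measure \<Rightarrow> ('a \<Rightarrow> real) \<Rightarrow> 'a \<Rightarrow> real" where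
  "dk_op M f x = (LINT y|M. f y * dist x y)"

definition is_eigenfunction :: "'a::metric_space measure \<Rightarrow> ('a \<Rightarrow> real) \<Rightarrow> real \<Rightarrow> bool" where
  "is_eigenfunction M \<phi> l \<longleftrightarrow>
     \<phi> \<in> L2 M \<and> \<not> ae_eq M \<phi> (\<lambda>_. 0) \<and> ae_eq M (dk_op M \<phi>) (\<lambda>x. l * \<phi> x)"

definition sqrt_ev :: "real \<Rightarrow> complex" where
  "sqrt_ev l = (if l \<ge> 0 then complex_of_real (sqrt l) else \<i> * complex_of_real (sqrt (- l)))"

text \<open>Top-k eigendata (0-indexed): nonzero eigenvalues ordered by strictly decreasing
  absolute value (counted with multiplicity, distinct absolute values among the top k, and
  strictly larger than the next one), L^2-orthonormal eigenfunctions (continuous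
  representative: the eigen-equation holds at every point of the space), sign fixed by
  <phi,|phi|> > 0.\<close>
definition dk_eigendata ::
  "'a::metric_space measure \<Rightarrow> nat \<Rightarrow> (nat \<Rightarrow> real) \<Rightarrow> (nat \<Rightarrow> 'a \<Rightarrow> real) \<Rightarrow> bool" where
  "dk_eigendata M k lam phi \<longleftrightarrow>
     (\<forall>i<k. phi i \<in> L2 M \<and> lam i \<noteq> 0 \<and>
            (\<forall>x\<in>space M. dk_op M (phi i) x = lam i * phi i x)) \<and>
     (\<forall>i<k. \<forall>j<k. L2_inner M (phi i) (phi j) = (if i = j then 1 else 0)) \<and>
     (\<forall>i<k. L2_inner M (phi i) (\<lambda>x. \<bar>phi i x\<bar>) > 0) \<and>
     (\<forall>i<k. \<forall>\<psi> \<mu>. is_eigenfunction M \<psi> \<mu> \<and> (\<forall>j<i. L2_inner M \<psi> (phi j) = 0)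
                 \<longrightarrow> \<bar>\<mu>\<bar> \<le> \<bar>lam i\<bar>) \<and>
     (\<forall>i<k. \<forall>\<psi> \<mu>. is_eigenfunction M \<psi> \<mu> \<and> (\<forall>j\<le>i. L2_inner M \<psi> (phi j) = 0)
                 \<longrightarrow> \<bar>\<mu>\<bar> < \<bar>lam i\<bar>)"

text \<open>Phi is a (the) distance kernel embedding of dimension k; C^k rendered as complex lists of length k.\<close>
definition dk_embedding :: "'a::metric_space measure \<Rightarrow> nat \<Rightarrow> ('a \<Rightarrow> complex list) \<Rightarrow> bool" where
  "dk_embedding M k \<Phi> \<longleftrightarrow>
     (\<exists>lam phi. dk_eigendata M k lam phi \<and>
        \<Phi> = (\<lambda>x. map (\<lambda>i. sqrt_ev (lam i) * complex_of_real (phi i x)) [0..<k]))"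

end

theory Submission
  imports Defs
begin

(* Composition with the inverse of iota identifies L^2(M) with L^2 of the pushforward measure,
  including almost-everywhere equality, and since iota preserves distances the change of variables
  formula carries the distance kernel operator of M to that of the pushforward; hence eigenfunctions
  correspond. For the embeddings, the eigendata of the pushforward pulled back along iota is
  eigendata of M, so it suffices that eigendata of M is unique. This goes by induction on i: the
  extremal characterisation of |lambda_i| on both sides gives equal absolute values, self-adjointness
  of the kernel (Fubini) then gives equal eigenvalues and, by the strict gap to the next eigenvalue,
  phi'_i = c phi_i almost everywhere; normalisation and the sign condition force c = 1, and the
  eigen-equation with lambda_i \<noteq> 0 turns almost-everywhere equality into equality on space M. *)

section \<open>Square-integrable functions\<close>

lemma L2_cong:
  assumes "\<And>x. x \<in> space M \<Longrightarrow> f x = g x"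
  shows "f \<in> L2 M \<longleftrightarrow> g \<in> L2 M"
proof -
  have "f \<in> borel_measurable M \<longleftrightarrow> g \<in> borel_measurable M"
    using assms by (rule measurable_cong)
  moreover have "integrable M (\<lambda>x. (f x)\<^sup>2) \<longleftrightarrow> integrable M (\<lambda>x. (g x)\<^sup>2)"
    using assms by (intro Bochner_Integration.integrable_cong) auto
  ultimately show ?thesis by (simp add: L2_def)
qed

lemma L2_borel_measurable: "f \<in> L2 M \<Longrightarrow> f \<in> borel_measurable M"
  by (simp add: L2_def)

lemma integrable_L2_mult:
  assumes "f \<in> L2 M" "g \<in> L2 M"
  shows "integrable M (\<lambda>x. f x * g x)"
proof (rule Bochner_Integration.integrable_bound)
  show "integrable M (\<lambda>x. (f x)\<^sup>2 + (g x)\<^sup>2)"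
    using assms by (auto simp: L2_def)
  show "(\<lambda>x. f x * g x) \<in> borel_measurable M"
    using assms by (auto simp: L2_def)
  show "AE x in M. norm (f x * g x) \<le> norm ((f x)\<^sup>2 + (g x)\<^sup>2)"
  proof (rule AE_I2)
    fix x
    have "2 * (\<bar>f x\<bar> * \<bar>g x\<bar>) \<le> (f x)\<^sup>2 + (g x)\<^sup>2"
      using sum_squares_bound[of "\<bar>f x\<bar>" "\<bar>g x\<bar>"] by simp
    moreover have "0 \<le> \<bar>f x\<bar> * \<bar>g x\<bar>"
      by simp
    ultimately have "\<bar>f x\<bar> * \<bar>g x\<bar> \<le> (f x)\<^sup>2 + (g x)\<^sup>2"
      by linarith
    then show "norm (f x * g x) \<le> norm ((f x)\<^sup>2 + (g x)\<^sup>2)"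
      by (simp add: abs_mult)
  qed
qed

lemma (in finite_measure) integrable_L2:
  assumes "f \<in> L2 M"
  shows "integrable M f"
proof -
  have "(\<lambda>_. 1) \<in> L2 M"
    by (simp add: L2_def)
  then show ?thesis
    using integrable_L2_mult[OF assms] by fastforce
qed

lemma L2_diff_cmult:
  assumes "f \<in> L2 M" "g \<in> L2 M"
  shows "(\<lambda>x. f x - c * g x) \<in> L2 M"
proof -
  have "(\<lambda>x. (f x - c * g x)\<^sup>2) = (\<lambda>x. f x * f x - 2 * c * (f x * g x) + c\<^sup>2 * (g x * g x))"
    by (simp add: power2_eq_square algebra_simps)
  moreover have "integrable M (\<lambda>x. f x * f x - 2 * c * (f x * g x) + c\<^sup>2 * (g x * g x))"
    using assms by (intro integrable_L2_mult Bochner_Integration.integrable_add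
        Bochner_Integration.integrable_diff integrable_mult_right)
  ultimately show ?thesis
    using assms by (auto simp: L2_def)
qed

lemma L2_inner_diff_left:
  assumes "f \<in> L2 M" "g \<in> L2 M" "h \<in> L2 M"
  shows "L2_inner M (\<lambda>x. f x - c * g x) h = L2_inner M f h - c * L2_inner M g h"
proof -
  have "L2_inner M (\<lambda>x. f x - c * g x) h = (LINT x|M. f x * h x - c * (g x * h x))"
    unfolding L2_inner_def by (simp add: algebra_simps)
  also have "\<dots> = L2_inner M f h - c * L2_inner M g h"
    unfolding L2_inner_def using assms by (simp add: integrable_L2_mult)
  finally show ?thesis .
qed

lemma L2_inner_cong_right:
  "(\<And>x. x \<in> space M \<Longrightarrow> g x = h x) \<Longrightarrow> L2_inner M f g = L2_inner M f h"
  unfolding L2_inner_def by (intro Bochner_Integration.integral_cong) auto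

lemma not_ae_eq_0_if_L2_inner_self_nonzero:
  assumes "f \<in> L2 M" "L2_inner M f f \<noteq> 0"
  shows "\<not> ae_eq M f (\<lambda>_. 0)"
proof
  assume "ae_eq M f (\<lambda>_. 0)"
  then have "AE x in M. f x * f x = 0"
    unfolding ae_eq_def by eventually_elim simp
  then have "L2_inner M f f = 0"
    using assms(1) unfolding L2_inner_def by (subst integral_cong_AE[where g = "\<lambda>_. 0"]) (auto simp: L2_def)
  with assms(2) show False ..
qed

lemma (in pair_sigma_finite) integrable_mult_fst_snd:
  fixes f :: "'a \<Rightarrow> real" and g :: "'b \<Rightarrow> real"
  assumes "integrable M1 f" "integrable M2 g"
  shows "integrable (M1 \<Otimes>\<^sub>M M2) (\<lambda>z. f (fst z) * g (snd z))"
proof (rule Fubini_integrable)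
  show "(\<lambda>z. f (fst z) * g (snd z)) \<in> borel_measurable (M1 \<Otimes>\<^sub>M M2)"
    using assms by measurable
  show "integrable M1 (\<lambda>x. \<integral>y. norm (f (fst (x, y)) * g (snd (x, y))) \<partial>M2)"
    using assms by (simp add: abs_mult)
  show "AE x in M1. integrable M2 (\<lambda>y. f (fst (x, y)) * g (snd (x, y)))"
    using assms by simp
qed

section \<open>The distance kernel operator on a compact metric measure space\<close>

lemma borel_measurable_dist_fst_snd:
  fixes M N :: "'a::metric_space measure"
  assumes "totally_bounded (space M)"
    and dist_M: "\<And>x. (\<lambda>y. dist x y) \<in> borel_measurable M"
    and dist_N: "\<And>x. (\<lambda>y. dist x y) \<in> borel_measurable N"
  shows "(\<lambda>z. dist (fst z) (snd z)) \<in> borel_measurable (M \<Otimes>\<^sub>M N)"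
proof -
  have "\<forall>n. \<exists>K. finite K \<and> space M \<subseteq> (\<Union>d\<in>K. {x. dist d x < inverse (Suc n)})"
    using assms(1) by (simp add: totally_bounded_metric)
  then obtain K where K_finite: "\<And>n. finite (K n)"
    and K_net: "\<And>n. space M \<subseteq> (\<Union>d\<in>K n. {x. dist d x < inverse (Suc n)})"
    by metis
  \<comment> \<open>Without second countability, measurability of dist on the product does not come for free;
    the shortest detour through the n-th finite net is measurable and exceeds the distance by at
    most 2/(n+1).\<close>
  define g where "g n z = Min ((\<lambda>d. dist (fst z) d + dist d (snd z)) ` K n)" for n z
  show ?thesis
  proof (rule borel_measurable_LIMSEQ_metric[where f = g])
    have "(\<lambda>x. dist x d) \<in> borel_measurable M" for d
      using dist_M[of d] by (metis (no_types) dist_commute ext)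
    then show "g n \<in> borel_measurable (M \<Otimes>\<^sub>M N)" for n
      unfolding g_def using K_finite dist_N by measurable
  next
    fix z assume "z \<in> space (M \<Otimes>\<^sub>M N)"
    then have z: "fst z \<in> space M"
      by (auto simp: space_pair_measure)
    have bounds: "dist (fst z) (snd z) \<le> g n z \<and> g n z \<le> dist (fst z) (snd z) + 2 * inverse (Suc n)" for n
    proof
      obtain d where d: "d \<in> K n" "dist d (fst z) < inverse (Suc n)"
        using K_net[of n] z by blast
      have "g n z \<le> dist (fst z) d + dist d (snd z)"
        unfolding g_def using K_finite d(1) by simp
      also have "\<dots> \<le> dist (fst z) (snd z) + 2 * inverse (Suc n)"
        using d(2) dist_triangle[of d "snd z" "fst z"] by (simp add: dist_commute)
      finally show "g n z \<le> dist (fst z) (snd z) + 2 * inverse (Suc n)" .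
      show "dist (fst z) (snd z) \<le> g n z"
        unfolding g_def using K_finite d(1) by (subst Min_ge_iff) (auto simp: dist_triangle)
    qed
    have upper_lim: "(\<lambda>n. dist (fst z) (snd z) + 2 * inverse (Suc n)) \<longlonglongrightarrow> dist (fst z) (snd z) + 2 * 0"
      by (intro tendsto_intros LIMSEQ_inverse_real_of_nat)
    show "(\<lambda>n. g n z) \<longlonglongrightarrow> dist (fst z) (snd z)"
      by (rule tendsto_sandwich[of "\<lambda>_. dist (fst z) (snd z)" _ _ "\<lambda>n. dist (fst z) (snd z) + 2 * inverse (Suc n)"])
        (use bounds upper_lim in auto)
  qed
qed

locale compact_metric_measure_space = finite_measure M for M :: "'a::metric_space measure" +
  assumes compact_space: "compact (space M)"
    and sets_eq_borel: "sets M = sets (restrict_space borel (space M))"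
begin

lemma borel_measurable_continuous_on_space:
  "continuous_on (space M) f \<Longrightarrow> f \<in> borel_measurable M"
  using borel_measurable_continuous_on_restrict measurable_cong_sets[OF sets_eq_borel refl] by blast

lemma borel_measurable_dist [measurable]: "(\<lambda>y. dist x y) \<in> borel_measurable M"
  by (intro borel_measurable_continuous_on_space continuous_intros)

lemma borel_measurable_dist_pair [measurable]:
  "(\<lambda>z. dist (fst z) (snd z)) \<in> borel_measurable (M \<Otimes>\<^sub>M M)"
  using compact_space by (intro borel_measurable_dist_fst_snd borel_measurable_dist)
    (simp add: compact_eq_totally_bounded totally_bounded_metric ball_def)

lemma dist_bounded_on_space: obtains B where "\<And>x y. x \<in> space M \<Longrightarrow> y \<in> space M \<Longrightarrow> dist x y \<le> B"
  using compact_imp_bounded[OF compact_space] by (auto simp: bounded_two_points)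

lemma integrable_dk_kernel:
  assumes "f \<in> L2 M" "x \<in> space M"
  shows "integrable M (\<lambda>y. f y * dist x y)"
proof -
  obtain B where B: "\<And>y. y \<in> space M \<Longrightarrow> dist x y \<le> B"
    using dist_bounded_on_space assms(2) by metis
  show ?thesis
  proof (rule Bochner_Integration.integrable_bound)
    show "integrable M (\<lambda>y. B * \<bar>f y\<bar>)"
      using assms(1) by (intro integrable_mult_right integrable_abs integrable_L2)
    show "(\<lambda>y. f y * dist x y) \<in> borel_measurable M"
      using L2_borel_measurable[OF assms(1)] by measurable
    show "AE y in M. norm (f y * dist x y) \<le> norm (B * \<bar>f y\<bar>)"
    proof (rule AE_I2)
      fix y assume "y \<in> space M"
      then have "dist x y \<le> \<bar>B\<bar>"
        using B by fastforce
      then show "norm (f y * dist x y) \<le> norm (B * \<bar>f y\<bar>)"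
        by (simp add: abs_mult mult.commute[of _ "\<bar>f y\<bar>"] mult_left_mono)
    qed
  qed
qed

lemma dk_op_diff:
  assumes "f \<in> L2 M" "g \<in> L2 M" "x \<in> space M"
  shows "dk_op M (\<lambda>y. f y - c * g y) x = dk_op M f x - c * dk_op M g x"
proof -
  have "dk_op M (\<lambda>y. f y - c * g y) x = (LINT y|M. f y * dist x y - c * (g y * dist x y))"
    unfolding dk_op_def by (simp add: algebra_simps)
  also have "\<dots> = dk_op M f x - c * dk_op M g x"
    unfolding dk_op_def using assms by (simp add: integrable_dk_kernel)
  finally show ?thesis .
qed

lemma dk_op_cong_AE:
  assumes "AE y in M. f y = g y" "f \<in> borel_measurable M" "g \<in> borel_measurable M"
  shows "dk_op M f x = dk_op M g x"
  unfolding dk_op_def using assms by (intro integral_cong_AE) (auto elim!: eventually_mono)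

lemma dk_op_selfadjoint:
  assumes f: "f \<in> L2 M" and g: "g \<in> L2 M"
  shows "(LINT x|M. dk_op M f x * g x) = (LINT x|M. f x * dk_op M g x)"
proof -
  interpret pair_sigma_finite M M ..
  obtain B where B: "\<And>x y. x \<in> space M \<Longrightarrow> y \<in> space M \<Longrightarrow> dist x y \<le> B"
    using dist_bounded_on_space by metis
  have [measurable]: "f \<in> borel_measurable M" "g \<in> borel_measurable M"
    using f g by (simp_all add: L2_def)
  define F where "F x y = g x * f y * dist x y" for x y
  have "integrable (M \<Otimes>\<^sub>M M) (case_prod F)"
  proof (rule Bochner_Integration.integrable_bound)
    show "integrable (M \<Otimes>\<^sub>M M) (\<lambda>z. B * \<bar>g (fst z)\<bar> * \<bar>f (snd z)\<bar>)"
      using f g by (intro integrable_mult_fst_snd integrable_mult_right integrable_abs integrable_L2)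
    show "case_prod F \<in> borel_measurable (M \<Otimes>\<^sub>M M)"
      unfolding F_def by measurable
    show "AE z in M \<Otimes>\<^sub>M M. norm (case_prod F z) \<le> norm (B * \<bar>g (fst z)\<bar> * \<bar>f (snd z)\<bar>)"
    proof (rule AE_I2)
      fix z assume "z \<in> space (M \<Otimes>\<^sub>M M)"
      then have "dist (fst z) (snd z) \<le> B"
        using B by (auto simp: space_pair_measure)
      then have "\<bar>g (fst z)\<bar> * \<bar>f (snd z)\<bar> * dist (fst z) (snd z) \<le> \<bar>g (fst z)\<bar> * \<bar>f (snd z)\<bar> * \<bar>B\<bar>"
        by (intro mult_left_mono) auto
      then show "norm (case_prod F z) \<le> norm (B * \<bar>g (fst z)\<bar> * \<bar>f (snd z)\<bar>)"
        by (simp add: F_def case_prod_beta abs_mult mult_ac)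
    qed
  qed
  then have "(LINT y|M. LINT x|M. F x y) = (LINT x|M. LINT y|M. F x y)"
    by (rule Fubini_integral)
  moreover have "(LINT y|M. F x y) = dk_op M f x * g x" for x
  proof -
    have "(LINT y|M. F x y) = (LINT y|M. f y * dist x y * g x)"
      by (simp add: F_def mult_ac)
    then show ?thesis
      unfolding dk_op_def by (simp only: integral_mult_left_zero)
  qed
  moreover have "(LINT x|M. F x y) = f y * dk_op M g y" for y
  proof -
    have "(LINT x|M. F x y) = (LINT x|M. f y * (g x * dist y x))"
      by (simp add: F_def mult_ac dist_commute)
    then show ?thesis
      unfolding dk_op_def by (simp only: integral_mult_right_zero)
  qed
  ultimately show ?thesis
    by simp
qed

end

section \<open>Uniqueness of the top eigendata\<close>

lemma is_eigenfunctionI: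
  assumes "f \<in> L2 M" "L2_inner M f f \<noteq> 0" "\<And>x. x \<in> space M \<Longrightarrow> dk_op M f x = l * f x"
  shows "is_eigenfunction M f l"
  using assms not_ae_eq_0_if_L2_inner_self_nonzero[OF assms(1,2)]
  by (auto simp: is_eigenfunction_def ae_eq_def intro: AE_I2)

context
  fixes M :: "'a::metric_space measure" and k :: nat and lam :: "nat \<Rightarrow> real" and phi :: "nat \<Rightarrow> 'a \<Rightarrow> real"
  assumes eigendata: "dk_eigendata M k lam phi"
begin

lemma dk_eigendataD:
  assumes "i < k"
  shows "phi i \<in> L2 M" "lam i \<noteq> 0" "\<And>x. x \<in> space M \<Longrightarrow> dk_op M (phi i) x = lam i * phi i x"
    and "L2_inner M (phi i) (phi i) = 1" "L2_inner M (phi i) (\<lambda>x. \<bar>phi i x\<bar>) > 0"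
  using eigendata assms unfolding dk_eigendata_def by auto

lemma dk_eigendata_orthogonal: "i < k \<Longrightarrow> j < k \<Longrightarrow> i \<noteq> j \<Longrightarrow> L2_inner M (phi i) (phi j) = 0"
  using eigendata unfolding dk_eigendata_def by auto

lemma dk_eigendata_is_eigenfunction: "i < k \<Longrightarrow> is_eigenfunction M (phi i) (lam i)"
  by (intro is_eigenfunctionI) (simp_all add: dk_eigendataD)

lemma dk_eigendata_bound:
  "i < k \<Longrightarrow> is_eigenfunction M \<psi> \<mu> \<Longrightarrow> (\<And>j. j < i \<Longrightarrow> L2_inner M \<psi> (phi j) = 0) \<Longrightarrow> \<bar>\<mu>\<bar> \<le> \<bar>lam i\<bar>"
  using eigendata unfolding dk_eigendata_def by blast

lemma dk_eigendata_bound_strict: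
  "i < k \<Longrightarrow> is_eigenfunction M \<psi> \<mu> \<Longrightarrow> (\<And>j. j \<le> i \<Longrightarrow> L2_inner M \<psi> (phi j) = 0) \<Longrightarrow> \<bar>\<mu>\<bar> < \<bar>lam i\<bar>"
  using eigendata unfolding dk_eigendata_def by blast

end

lemma normalized_multiple_coeff_eq_1:
  assumes "AE x in M. g x = c * f x" "f \<in> borel_measurable M" "g \<in> borel_measurable M"
    and "L2_inner M f f = 1" "L2_inner M g g = 1"
    and "L2_inner M f (\<lambda>x. \<bar>f x\<bar>) > 0" "L2_inner M g (\<lambda>x. \<bar>g x\<bar>) > 0"
  shows "c = 1"
proof -
  have "L2_inner M g g = c\<^sup>2 * L2_inner M f f"
    unfolding L2_inner_def using assms(1-3)
    by (subst integral_cong_AE[where g = "\<lambda>x. c\<^sup>2 * (f x * f x)"]) (auto elim!: eventually_mono simp: power2_eq_square)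
  then have "c\<^sup>2 = 1"
    using assms(4,5) by simp
  have "L2_inner M g (\<lambda>x. \<bar>g x\<bar>) = c * \<bar>c\<bar> * L2_inner M f (\<lambda>x. \<bar>f x\<bar>)"
    unfolding L2_inner_def using assms(1-3)
    by (subst integral_cong_AE[where g = "\<lambda>x. c * \<bar>c\<bar> * (f x * \<bar>f x\<bar>)"]) (auto elim!: eventually_mono simp: abs_mult)
  then have "c > 0"
    using assms(6,7) by (simp add: zero_less_mult_iff)
  with \<open>c\<^sup>2 = 1\<close> show "c = 1"
    by (simp add: power2_eq_1_iff)
qed

context compact_metric_measure_space
begin

lemma dk_eigenvalues_eq_if_not_orthogonal:
  assumes "f \<in> L2 M" "g \<in> L2 M" "L2_inner M f g \<noteq> 0"
    and "\<And>x. x \<in> space M \<Longrightarrow> dk_op M f x = l * f x" "\<And>x. x \<in> space M \<Longrightarrow> dk_op M g x = l' * g x"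
  shows "l = l'"
proof -
  have "(LINT x|M. dk_op M f x * g x) = l * L2_inner M f g"
    unfolding L2_inner_def using assms(4)
    by (subst Bochner_Integration.integral_cong[OF refl, where g = "\<lambda>x. l * (f x * g x)"]) auto
  moreover have "(LINT x|M. f x * dk_op M g x) = l' * L2_inner M f g"
    unfolding L2_inner_def using assms(5)
    by (subst Bochner_Integration.integral_cong[OF refl, where g = "\<lambda>x. l' * (f x * g x)"]) auto
  ultimately show ?thesis
    using dk_op_selfadjoint[OF assms(1,2)] assms(3) by simp
qed

lemma dk_eigenfunctions_eq_if_AE_eq:
  assumes "AE x in M. f x = g x" "f \<in> borel_measurable M" "g \<in> borel_measurable M" "l \<noteq> 0"
    and "\<And>x. x \<in> space M \<Longrightarrow> dk_op M f x = l * f x" "\<And>x. x \<in> space M \<Longrightarrow> dk_op M g x = l * g x"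
    and "x \<in> space M"
  shows "f x = g x"
  using dk_op_cong_AE[OF assms(1-3), of x] assms(4-7) by simp

lemma dk_eigendata_eigenspace:
  assumes E: "dk_eigendata M k lam phi" and "i < k" and "g \<in> L2 M"
    and eigen: "\<And>x. x \<in> space M \<Longrightarrow> dk_op M g x = lam i * g x"
    and orth: "\<And>j. j < i \<Longrightarrow> L2_inner M g (phi j) = 0"
  shows "AE x in M. g x = L2_inner M g (phi i) * phi i x"
proof -
  define c where "c = L2_inner M g (phi i)"
  define r where "r x = g x - c * phi i x" for x
  have phi_L2: "j \<le> i \<Longrightarrow> phi j \<in> L2 M" for j
    using dk_eigendataD(1)[OF E] \<open>i < k\<close> by simp
  have r_L2: "r \<in> L2 M"
    unfolding r_def using \<open>g \<in> L2 M\<close> phi_L2 by (intro L2_diff_cmult) auto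
  have r_eigen: "dk_op M r x = lam i * r x" if "x \<in> space M" for x
    unfolding r_def using dk_op_diff[OF \<open>g \<in> L2 M\<close> phi_L2[OF order_refl] that] eigen[OF that]
      dk_eigendataD(3)[OF E \<open>i < k\<close> that] by (simp add: algebra_simps)
  have r_orth: "L2_inner M r (phi j) = 0" if "j \<le> i" for j
  proof -
    have "L2_inner M r (phi j) = L2_inner M g (phi j) - c * L2_inner M (phi i) (phi j)"
      unfolding r_def using \<open>g \<in> L2 M\<close> phi_L2 that by (intro L2_inner_diff_left) auto
    then show ?thesis
      using that orth[of j] dk_eigendataD(4)[OF E \<open>i < k\<close>] dk_eigendata_orthogonal[OF E, of i j] \<open>i < k\<close>
      by (cases "j = i") (auto simp: c_def)
  qed
  have "ae_eq M r (\<lambda>_. 0)"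
  proof (rule ccontr)
    assume "\<not> ae_eq M r (\<lambda>_. 0)"
    with r_L2 r_eigen have "is_eigenfunction M r (lam i)"
      by (auto simp: is_eigenfunction_def ae_eq_def intro: AE_I2)
    then have "\<bar>lam i\<bar> < \<bar>lam i\<bar>"
      by (rule dk_eigendata_bound_strict[OF E \<open>i < k\<close> _ r_orth])
    then show False
      by simp
  qed
  then show ?thesis
    by (simp add: ae_eq_def r_def c_def)
qed

lemma dk_eigendata_unique_step:
  assumes E: "dk_eigendata M k lam phi" and E': "dk_eigendata M k lam' phi'" and "i < k"
    and agree: "\<And>j x. j < i \<Longrightarrow> x \<in> space M \<Longrightarrow> phi j x = phi' j x"
  shows "lam i = lam' i \<and> (\<forall>x\<in>space M. phi i x = phi' i x)"
proof -
  note a = dk_eigendataD[OF E \<open>i < k\<close>] and b = dk_eigendataD[OF E' \<open>i < k\<close>]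
  have a_orth: "L2_inner M (phi i) (phi' j) = 0" if "j < i" for j
    using dk_eigendata_orthogonal[OF E, of i j] that \<open>i < k\<close> agree[OF that]
    by (subst L2_inner_cong_right[where h = "phi j"]) auto
  have b_orth: "L2_inner M (phi' i) (phi j) = 0" if "j < i" for j
    using dk_eigendata_orthogonal[OF E', of i j] that \<open>i < k\<close> agree[OF that]
    by (subst L2_inner_cong_right[where h = "phi' j"]) auto
  have b_eigenfunction: "is_eigenfunction M (phi' i) (lam' i)"
    by (rule dk_eigendata_is_eigenfunction[OF E' \<open>i < k\<close>])
  have "\<bar>lam' i\<bar> \<le> \<bar>lam i\<bar>"
    by (rule dk_eigendata_bound[OF E \<open>i < k\<close> b_eigenfunction b_orth])
  moreover have "\<bar>lam i\<bar> \<le> \<bar>lam' i\<bar>"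
    by (rule dk_eigendata_bound[OF E' \<open>i < k\<close> dk_eigendata_is_eigenfunction[OF E \<open>i < k\<close>] a_orth])
  moreover have "\<bar>lam' i\<bar> < \<bar>lam i\<bar>" if "L2_inner M (phi' i) (phi i) = 0"
  proof (rule dk_eigendata_bound_strict[OF E \<open>i < k\<close> b_eigenfunction])
    show "L2_inner M (phi' i) (phi j) = 0" if "j \<le> i" for j
      using b_orth \<open>L2_inner M (phi' i) (phi i) = 0\<close> \<open>j \<le> i\<close> by (cases "j = i") auto
  qed
  ultimately have "L2_inner M (phi' i) (phi i) \<noteq> 0"
    by linarith
  then have lam_eq: "lam' i = lam i"
    by (rule dk_eigenvalues_eq_if_not_orthogonal[OF b(1) a(1) _ b(3) a(3)])
  have b_eigen: "dk_op M (phi' i) x = lam i * phi' i x" if "x \<in> space M" for x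
    using b(3)[OF that] lam_eq by simp
  have AE_multiple: "AE x in M. phi' i x = L2_inner M (phi' i) (phi i) * phi i x"
    by (rule dk_eigendata_eigenspace[OF E \<open>i < k\<close> b(1) b_eigen b_orth])
  have coeff: "L2_inner M (phi' i) (phi i) = 1"
    using normalized_multiple_coeff_eq_1[OF AE_multiple L2_borel_measurable[OF a(1)] L2_borel_measurable[OF b(1)]]
      a(4,5) b(4,5) by simp
  from AE_multiple have "AE x in M. phi i x = phi' i x"
    by eventually_elim (simp add: coeff)
  then have "phi i x = phi' i x" if "x \<in> space M" for x
    by (rule dk_eigenfunctions_eq_if_AE_eq[OF _ L2_borel_measurable[OF a(1)] L2_borel_measurable[OF b(1)]
          a(2) a(3) b_eigen that])
  with lam_eq show ?thesis
    by auto
qed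

lemma dk_eigendata_unique:
  assumes "dk_eigendata M k lam phi" "dk_eigendata M k lam' phi'" "i < k"
  shows "lam i = lam' i" "x \<in> space M \<Longrightarrow> phi i x = phi' i x"
proof -
  have "lam i = lam' i \<and> (\<forall>x\<in>space M. phi i x = phi' i x)"
    using \<open>i < k\<close>
  proof (induction i rule: less_induct)
    case (less i)
    show ?case
    proof (rule dk_eigendata_unique_step[OF assms(1,2) less.prems])
      show "phi j x = phi' j x" if "j < i" "x \<in> space M" for j x
        using less.IH[of j] less.prems that by simp
    qed
  qed
  then show "lam i = lam' i" "x \<in> space M \<Longrightarrow> phi i x = phi' i x"
    by auto
qed

end

section \<open>Transport along an isometric embedding\<close>

lemma L2_distr_iff:
  assumes [measurable]: "\<iota> \<in> measurable M N" "g \<in> borel_measurable N"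
  shows "g \<in> L2 (distr M N \<iota>) \<longleftrightarrow> (\<lambda>x. g (\<iota> x)) \<in> L2 M"
proof -
  have "(\<lambda>x. g (\<iota> x)) \<in> borel_measurable M"
    by measurable
  moreover have "integrable (distr M N \<iota>) (\<lambda>y. (g y)\<^sup>2) \<longleftrightarrow> integrable M (\<lambda>x. (g (\<iota> x))\<^sup>2)"
    by (intro integrable_distr_eq) measurable
  ultimately show ?thesis
    using assms(2) by (simp add: L2_def)
qed

lemma L2_inner_distr:
  assumes [measurable]: "\<iota> \<in> measurable M N" "g \<in> borel_measurable N" "h \<in> borel_measurable N"
  shows "L2_inner (distr M N \<iota>) g h = L2_inner M (\<lambda>x. g (\<iota> x)) (\<lambda>x. h (\<iota> x))"
  unfolding L2_inner_def by (intro integral_distr) measurable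

locale isometric_embedding = compact_metric_measure_space M for M :: "'a::metric_space measure" +
  fixes \<iota> :: "'a \<Rightarrow> 'b::metric_space"
  assumes dist_preserving: "\<And>x y. x \<in> space M \<Longrightarrow> y \<in> space M \<Longrightarrow> dist (\<iota> x) (\<iota> y) = dist x y"
begin

abbreviation M\<^sub>\<iota> :: "'b measure" where
  "M\<^sub>\<iota> \<equiv> distr M (restrict_space borel (\<iota> ` space M)) \<iota>"

abbreviation \<iota>_inv :: "'b \<Rightarrow> 'a" where
  "\<iota>_inv \<equiv> inv_into (space M) \<iota>"

definition transport :: "('a \<Rightarrow> real) \<Rightarrow> 'b \<Rightarrow> real" where
  "transport f y = f (\<iota>_inv y)"

lemma inj_on_\<iota>: "inj_on \<iota> (space M)"
  by (rule inj_onI) (metis dist_eq_0_iff dist_preserving)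

lemma \<iota>_inv_\<iota> [simp]: "x \<in> space M \<Longrightarrow> \<iota>_inv (\<iota> x) = x"
  using inj_on_\<iota> by (rule inv_into_f_f)

lemma transport_apply [simp]: "x \<in> space M \<Longrightarrow> transport f (\<iota> x) = f x"
  by (simp add: transport_def)

lemma measurable_\<iota>: "\<iota> \<in> measurable M (restrict_space borel (\<iota> ` space M))"
proof -
  have "1-lipschitz_on (space M) \<iota>"
    by (intro lipschitz_onI) (simp_all add: dist_preserving)
  then have "\<iota> \<in> borel_measurable M"
    by (intro borel_measurable_continuous_on_space lipschitz_on_continuous_on)
  then show ?thesis
    by (simp add: measurable_restrict_space2_iff)
qed

lemma measurable_\<iota>_inv: "\<iota>_inv \<in> measurable M\<^sub>\<iota> M"
proof -
  have "1-lipschitz_on (\<iota> ` space M) \<iota>_inv"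
    by (intro lipschitz_onI) (auto simp: dist_preserving)
  then have "\<iota>_inv \<in> measurable (restrict_space borel (\<iota> ` space M)) (restrict_space borel (space M))"
    by (auto simp: measurable_restrict_space2_iff space_restrict_space inv_into_into
        intro: borel_measurable_continuous_on_restrict lipschitz_on_continuous_on)
  then show ?thesis
    by (simp add: measurable_cong_sets[OF refl sets_eq_borel])
qed

lemma distr_M\<^sub>\<iota>_\<iota>_inv: "distr M\<^sub>\<iota> M \<iota>_inv = M"
proof -
  have "distr M\<^sub>\<iota> M \<iota>_inv = distr M M (\<iota>_inv \<circ> \<iota>)"
    using measurable_\<iota>_inv measurable_\<iota> by (simp add: distr_distr)
  also have "\<dots> = distr M M (\<lambda>x. x)"
    by (rule distr_cong) simp_all
  finally show ?thesis
    by simp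
qed

lemma AE_M\<^sub>\<iota>_iff: "(AE y in M\<^sub>\<iota>. P y) \<longleftrightarrow> (AE x in M. P (\<iota> x))"
proof
  show "AE y in M\<^sub>\<iota>. P y \<Longrightarrow> AE x in M. P (\<iota> x)"
    using measurable_\<iota> by (rule AE_distrD)
  assume "AE x in M. P (\<iota> x)"
  then have "AE y in M\<^sub>\<iota>. P (\<iota> (\<iota>_inv y))"
    using AE_distrD[OF measurable_\<iota>_inv, of "\<lambda>x. P (\<iota> x)"] by (simp only: distr_M\<^sub>\<iota>_\<iota>_inv)
  then show "AE y in M\<^sub>\<iota>. P y"
    by (rule AE_mp) (auto simp: space_restrict_space f_inv_into_f intro!: AE_I2)
qed

lemma borel_measurable_transport: "f \<in> borel_measurable M \<Longrightarrow> transport f \<in> borel_measurable M\<^sub>\<iota>"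
  unfolding transport_def by (rule measurable_compose[OF measurable_\<iota>_inv])

lemma L2_transport:
  assumes "f \<in> L2 M"
  shows "transport f \<in> L2 M\<^sub>\<iota>"
proof -
  have "transport f \<in> L2 M\<^sub>\<iota> \<longleftrightarrow> (\<lambda>x. transport f (\<iota> x)) \<in> L2 M"
    using borel_measurable_transport[OF L2_borel_measurable[OF assms]]
    by (intro L2_distr_iff[OF measurable_\<iota>]) simp
  also have "\<dots> \<longleftrightarrow> f \<in> L2 M"
    by (rule L2_cong) simp
  finally show ?thesis
    using assms by simp
qed

lemma L2_M\<^sub>\<iota>_comp: "h \<in> L2 M\<^sub>\<iota> \<Longrightarrow> (\<lambda>x. h (\<iota> x)) \<in> L2 M"
  using L2_distr_iff[OF measurable_\<iota>, of h] L2_borel_measurable[of h M\<^sub>\<iota>] by simp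

lemma ae_eq_transport_iff: "ae_eq M\<^sub>\<iota> (transport f) (transport g) \<longleftrightarrow> ae_eq M f g"
  unfolding ae_eq_def AE_M\<^sub>\<iota>_iff by (intro AE_cong) simp

lemma ae_eq_transport_comp: "ae_eq M\<^sub>\<iota> (transport (\<lambda>x. h (\<iota> x))) h"
  unfolding ae_eq_def AE_M\<^sub>\<iota>_iff by simp

lemma borel_measurable_dist_M\<^sub>\<iota>: "(\<lambda>y. dist z y) \<in> borel_measurable M\<^sub>\<iota>"
  by (simp add: measurable_restrict_space1 borel_measurable_continuous_onI continuous_on_dist)

lemma dk_op_M\<^sub>\<iota>:
  assumes "g \<in> borel_measurable M\<^sub>\<iota>" "x \<in> space M"
  shows "dk_op M\<^sub>\<iota> g (\<iota> x) = dk_op M (\<lambda>z. g (\<iota> z)) x"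
proof -
  have "dk_op M\<^sub>\<iota> g (\<iota> x) = (LINT z|M. g (\<iota> z) * dist (\<iota> x) (\<iota> z))"
    unfolding dk_op_def using assms(1) borel_measurable_dist_M\<^sub>\<iota>
    by (intro integral_distr[OF measurable_\<iota>]) simp
  also have "\<dots> = dk_op M (\<lambda>z. g (\<iota> z)) x"
    unfolding dk_op_def using assms(2) by (intro Bochner_Integration.integral_cong) (simp_all add: dist_preserving)
  finally show ?thesis .
qed

lemma dk_op_transport:
  assumes "f \<in> borel_measurable M" "x \<in> space M"
  shows "dk_op M\<^sub>\<iota> (transport f) (\<iota> x) = dk_op M f x"
proof -
  have "dk_op M\<^sub>\<iota> (transport f) (\<iota> x) = dk_op M (\<lambda>z. transport f (\<iota> z)) x"
    using borel_measurable_transport[OF assms(1)] assms(2) by (rule dk_op_M\<^sub>\<iota>)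
  also have "\<dots> = dk_op M f x"
    unfolding dk_op_def by (intro Bochner_Integration.integral_cong) simp_all
  finally show ?thesis .
qed

lemma ae_eq_dk_op_transport: "f \<in> borel_measurable M \<Longrightarrow> ae_eq M\<^sub>\<iota> (dk_op M\<^sub>\<iota> (transport f)) (transport (dk_op M f))"
  unfolding ae_eq_def AE_M\<^sub>\<iota>_iff by (intro AE_I2) (simp add: dk_op_transport)

lemma is_eigenfunction_transport_iff:
  assumes "f \<in> L2 M"
  shows "is_eigenfunction M\<^sub>\<iota> (transport f) l \<longleftrightarrow> is_eigenfunction M f l"
proof -
  have "ae_eq M\<^sub>\<iota> (transport f) (\<lambda>_. 0) \<longleftrightarrow> ae_eq M f (\<lambda>_. 0)"
    using ae_eq_transport_iff[of f "\<lambda>_. 0"] by (simp add: transport_def[abs_def])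
  moreover have "ae_eq M\<^sub>\<iota> (dk_op M\<^sub>\<iota> (transport f)) (\<lambda>y. l * transport f y) \<longleftrightarrow> ae_eq M (dk_op M f) (\<lambda>x. l * f x)"
    unfolding ae_eq_def AE_M\<^sub>\<iota>_iff using L2_borel_measurable[OF assms]
    by (intro AE_cong) (simp add: dk_op_transport)
  ultimately show ?thesis
    using assms L2_transport by (auto simp: is_eigenfunction_def)
qed

lemma L2_inner_transport:
  assumes "f \<in> borel_measurable M" "g \<in> borel_measurable M\<^sub>\<iota>"
  shows "L2_inner M\<^sub>\<iota> (transport f) g = L2_inner M f (\<lambda>x. g (\<iota> x))"
proof -
  have "L2_inner M\<^sub>\<iota> (transport f) g = L2_inner M (\<lambda>x. transport f (\<iota> x)) (\<lambda>x. g (\<iota> x))"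
    using measurable_\<iota> borel_measurable_transport[OF assms(1)] assms(2) by (simp add: L2_inner_distr)
  also have "\<dots> = L2_inner M f (\<lambda>x. g (\<iota> x))"
    unfolding L2_inner_def by (intro Bochner_Integration.integral_cong) simp_all
  finally show ?thesis .
qed

lemma dk_eigendata_bounds_pullback:
  assumes E: "dk_eigendata M\<^sub>\<iota> k lam phi" and "i < k" and eigen: "is_eigenfunction M \<psi> \<mu>"
  shows "(\<And>j. j < i \<Longrightarrow> L2_inner M \<psi> (\<lambda>x. phi j (\<iota> x)) = 0) \<Longrightarrow> \<bar>\<mu>\<bar> \<le> \<bar>lam i\<bar>"
    and "(\<And>j. j \<le> i \<Longrightarrow> L2_inner M \<psi> (\<lambda>x. phi j (\<iota> x)) = 0) \<Longrightarrow> \<bar>\<mu>\<bar> < \<bar>lam i\<bar>"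
proof -
  have "\<psi> \<in> L2 M"
    using eigen by (simp add: is_eigenfunction_def)
  then have transport_eigen: "is_eigenfunction M\<^sub>\<iota> (transport \<psi>) \<mu>"
    using eigen is_eigenfunction_transport_iff by simp
  have inner: "L2_inner M\<^sub>\<iota> (transport \<psi>) (phi j) = L2_inner M \<psi> (\<lambda>x. phi j (\<iota> x))" if "j \<le> i" for j
    using L2_inner_transport[OF L2_borel_measurable[OF \<open>\<psi> \<in> L2 M\<close>] L2_borel_measurable[OF dk_eigendataD(1)[OF E]]]
      that \<open>i < k\<close> by simp
  show "\<bar>\<mu>\<bar> \<le> \<bar>lam i\<bar>" if orth: "\<And>j. j < i \<Longrightarrow> L2_inner M \<psi> (\<lambda>x. phi j (\<iota> x)) = 0"
  proof (rule dk_eigendata_bound[OF E \<open>i < k\<close> transport_eigen])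
    show "L2_inner M\<^sub>\<iota> (transport \<psi>) (phi j) = 0" if "j < i" for j
      using inner[of j] orth[OF that] that by simp
  qed
  show "\<bar>\<mu>\<bar> < \<bar>lam i\<bar>" if orth: "\<And>j. j \<le> i \<Longrightarrow> L2_inner M \<psi> (\<lambda>x. phi j (\<iota> x)) = 0"
  proof (rule dk_eigendata_bound_strict[OF E \<open>i < k\<close> transport_eigen])
    show "L2_inner M\<^sub>\<iota> (transport \<psi>) (phi j) = 0" if "j \<le> i" for j
      using inner[OF that] orth[OF that] by simp
  qed
qed

lemma dk_eigendata_pullback:
  assumes E: "dk_eigendata M\<^sub>\<iota> k lam phi"
  shows "dk_eigendata M k lam (\<lambda>i x. phi i (\<iota> x))"
  unfolding dk_eigendata_def
proof (intro conjI allI impI ballI)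
  fix i assume "i < k"
  have phi_measurable: "phi j \<in> borel_measurable (restrict_space borel (\<iota> ` space M))" if "j < k" for j
    using L2_borel_measurable[OF dk_eigendataD(1)[OF E that]] by simp
  have inner: "L2_inner M (\<lambda>x. phi i (\<iota> x)) (\<lambda>x. g (\<iota> x)) = L2_inner M\<^sub>\<iota> (phi i) g"
    if "g \<in> borel_measurable (restrict_space borel (\<iota> ` space M))" for g
    using L2_inner_distr[OF measurable_\<iota> phi_measurable[OF \<open>i < k\<close>] that] by simp
  show "(\<lambda>x. phi i (\<iota> x)) \<in> L2 M"
    using L2_M\<^sub>\<iota>_comp dk_eigendataD(1)[OF E \<open>i < k\<close>] .
  show "lam i \<noteq> 0"
    using dk_eigendataD(2)[OF E \<open>i < k\<close>] .
  show "dk_op M (\<lambda>x. phi i (\<iota> x)) x = lam i * phi i (\<iota> x)" if "x \<in> space M" for x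
    using dk_op_M\<^sub>\<iota>[of "phi i" x] dk_eigendataD(3)[OF E \<open>i < k\<close>, of "\<iota> x"] phi_measurable \<open>i < k\<close> that
    by (simp add: space_restrict_space)
  show "L2_inner M (\<lambda>x. phi i (\<iota> x)) (\<lambda>x. \<bar>phi i (\<iota> x)\<bar>) > 0"
    using inner[of "\<lambda>y. \<bar>phi i y\<bar>"] phi_measurable[OF \<open>i < k\<close>] dk_eigendataD(5)[OF E \<open>i < k\<close>]
    by simp
  show "L2_inner M (\<lambda>x. phi i (\<iota> x)) (\<lambda>x. phi j (\<iota> x)) = (if i = j then 1 else 0)" if "j < k" for j
    using inner[OF phi_measurable[OF that]] E \<open>i < k\<close> that by (simp add: dk_eigendata_def)
  show "\<bar>\<mu>\<bar> \<le> \<bar>lam i\<bar>"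
    if "is_eigenfunction M \<psi> \<mu> \<and> (\<forall>j<i. L2_inner M \<psi> (\<lambda>x. phi j (\<iota> x)) = 0)" for \<psi> \<mu>
    using dk_eigendata_bounds_pullback(1)[OF E \<open>i < k\<close>] that by blast
  show "\<bar>\<mu>\<bar> < \<bar>lam i\<bar>"
    if "is_eigenfunction M \<psi> \<mu> \<and> (\<forall>j\<le>i. L2_inner M \<psi> (\<lambda>x. phi j (\<iota> x)) = 0)" for \<psi> \<mu>
    using dk_eigendata_bounds_pullback(2)[OF E \<open>i < k\<close>] that by blast
qed

lemma dk_embedding_image_eq:
  assumes "dk_embedding M k \<Phi>" "dk_embedding M\<^sub>\<iota> k \<Phi>'"
  shows "\<Phi> ` space M = \<Phi>' ` \<iota> ` space M"
proof -
  obtain lam phi where E: "dk_eigendata M k lam phi"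
    and \<Phi>: "\<Phi> = (\<lambda>x. map (\<lambda>i. sqrt_ev (lam i) * complex_of_real (phi i x)) [0..<k])"
    using assms(1) unfolding dk_embedding_def by blast
  obtain lam' phi' where E': "dk_eigendata M\<^sub>\<iota> k lam' phi'"
    and \<Phi>': "\<Phi>' = (\<lambda>y. map (\<lambda>i. sqrt_ev (lam' i) * complex_of_real (phi' i y)) [0..<k])"
    using assms(2) unfolding dk_embedding_def by blast
  note unique = dk_eigendata_unique[OF E dk_eigendata_pullback[OF E']]
  have "\<Phi> x = \<Phi>' (\<iota> x)" if "x \<in> space M" for x
    unfolding \<Phi> \<Phi>' using unique that by (intro map_cong) auto
  then show ?thesis
    by (simp add: image_image cong: image_cong)
qed

end

theorem proposition5p7:
  fixes M :: "'a::metric_space measure" and \<iota> :: "'a \<Rightarrow> 'b::metric_space"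
  assumes "compact (space M)"
    and "sets M = sets (restrict_space borel (space M))"
    and "finite_measure M"
    and "\<forall>x\<in>space M. \<forall>y\<in>space M. dist (\<iota> x) (\<iota> y) = dist x y"
  defines "M' \<equiv> distr M (restrict_space borel (\<iota> ` space M)) \<iota>"
  shows "(\<exists>T :: ('a \<Rightarrow> real) \<Rightarrow> ('b \<Rightarrow> real).
            (\<forall>f\<in>L2 M. T f \<in> L2 M') \<and>
            (\<forall>f\<in>L2 M. \<forall>g\<in>L2 M. ae_eq M' (T f) (T g) \<longleftrightarrow> ae_eq M f g) \<and>
            (\<forall>h\<in>L2 M'. \<exists>f\<in>L2 M. ae_eq M' (T f) h) \<and>
            (\<forall>f\<in>L2 M. ae_eq M' (dk_op M' (T f)) (T (dk_op M f))) \<and>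
            (\<forall>\<phi>\<in>L2 M. \<forall>l. is_eigenfunction M \<phi> l \<longleftrightarrow> is_eigenfunction M' (T \<phi>) l))
         \<and> (\<forall>k \<Phi> \<Phi>'. dk_embedding M k \<Phi> \<and> dk_embedding M' k \<Phi>' \<longrightarrow>
              \<Phi> ` space M = \<Phi>' ` (\<iota> ` space M))"
proof -
  interpret isometric_embedding M \<iota>
    using assms(1-4) by (intro isometric_embedding.intro compact_metric_measure_space.intro
        compact_metric_measure_space_axioms.intro isometric_embedding_axioms.intro) auto
  show ?thesis
    unfolding M'_def
  proof (intro conjI exI[of _ transport] ballI allI impI)
    show "transport f \<in> L2 M\<^sub>\<iota>" if "f \<in> L2 M" for f
      using that by (rule L2_transport)
    show "ae_eq M\<^sub>\<iota> (transport f) (transport g) \<longleftrightarrow> ae_eq M f g" for f g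
      by (rule ae_eq_transport_iff)
    show "\<exists>f\<in>L2 M. ae_eq M\<^sub>\<iota> (transport f) h" if "h \<in> L2 M\<^sub>\<iota>" for h
      using L2_M\<^sub>\<iota>_comp[OF that] ae_eq_transport_comp by blast
    show "ae_eq M\<^sub>\<iota> (dk_op M\<^sub>\<iota> (transport f)) (transport (dk_op M f))" if "f \<in> L2 M" for f
      using L2_borel_measurable[OF that] by (rule ae_eq_dk_op_transport)
    show "is_eigenfunction M \<phi> l \<longleftrightarrow> is_eigenfunction M\<^sub>\<iota> (transport \<phi>) l" if "\<phi> \<in> L2 M" for \<phi> l
      using is_eigenfunction_transport_iff[OF that] by simp
    show "\<Phi> ` space M = \<Phi>' ` \<iota> ` space M"
      if "dk_embedding M k \<Phi> \<and> dk_embedding M\<^sub>\<iota> k \<Phi>'" for k \<Phi> \<Phi>'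
      using that dk_embedding_image_eq by blast
  qed
qed

end
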